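(* Let $t\geq 3$ and let $(a_1,\dots,a_t,n_1,n_2)$ be integers with $a_1\geq\cdots\geq a_t\geq 2$, $n_1\geq n_2\geq 2$, $a_l\neq n_j$ for all $l,j$, and $\prod_{l=1}^t a_l!=n_1!n_2!$. Suppose $n_1>a_1$ and $n_2>a_i$ for some $2\leq i\leq t$. Put $m_1=a_1+1$, $k_1=n_1-a_1$, $m_2=a_i+1$, $k_2=n_2-a_i$, and $\Delta(m,k)=m(m+1)\cdots(m+k-1)$, so that $\prod_{l\neq 1,i}a_l!=\Delta(m_1,k_1)\Delta(m_2,k_2)$. Then: (i) none of the integers $m_1,m_1+1,\dots,m_1+k_1-1$ is a prime; (ii) with $a=\max_{l\neq 1,i}a_l$, one has $$a\log(a)-a\leq\log(a!)\leq (k_1+k_2)\log(2m_1).$$ *)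

theory Defs
  imports Complex_Main "HOL-Computational_Algebra.Primes"
begin

definition Delta :: "nat \<Rightarrow> nat \<Rightarrow> nat" where
  "Delta m k = (\<Prod>j<k. m + j)"

end

theory Submission
  imports Defs
begin

(* A prime p with a_1 < p <= n_1 divides n_1! but none of the a_l!, which is (i). By Bertrand's
   postulate this forces n_1 < 2 a_1, so every factor of the two Delta products is below 2 m_1 and
   a! <= prod_{l <> 1,i} a_l! <= (2 m_1)^(k_1 + k_2); the lower bound for log(a!) is n^n / n! <= e^n.

   Bertrand's postulate follows Erdos: if there were no prime in (n, 2n], every prime factor of
   binom(2n, n) would be at most 2n/3, and only those below sqrt(2n) could divide it more than once,
   so binom(2n, n) <= (2n)^sqrt(2n) * 4^(2n/3), contradicting 4^n <= (2n + 1) binom(2n, n) for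
   n >= 8192. Smaller n are covered by a chain of primes, each less than twice its predecessor. *)

section \<open>Legendre's formula and the central binomial coefficient\<close>

lemma multiplicity_eq_card_prime_power_dvd:
  fixes p m N :: nat
  assumes p: "prime p" and m: "0 < m" "m \<le> N"
  shows "multiplicity p m = card ({1..N} \<inter> {i. p ^ i dvd m})"
proof -
  let ?v = "multiplicity p m"
  have "?v < 2 ^ ?v" by (rule less_exp)
  also have "\<dots> \<le> p ^ ?v" using prime_ge_2_nat[OF p] by (rule power_mono) simp
  also have "\<dots> \<le> m" using multiplicity_dvd m(1) by (rule dvd_imp_le)
  finally have "?v \<le> N" using m(2) by simp
  have "\<not> is_unit p" using prime_gt_1_nat[OF p] by simp
  then have "p ^ i dvd m \<longleftrightarrow> i \<le> ?v" for i
    using m(1) by (intro power_dvd_iff_le_multiplicity) simp_all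
  then have "{1..N} \<inter> {i. p ^ i dvd m} = {1..N} \<inter> {..?v}" by blast
  also have "\<dots> = {1..?v}" using \<open>?v \<le> N\<close> by auto
  finally show ?thesis by simp
qed

lemma Suc_div_eq_div_add_of_bool: "Suc n div q = n div q + of_bool (q dvd Suc n)" for n q :: nat
  by (cases "q dvd Suc n") (simp_all add: div_Suc dvd_eq_mod_eq_0)

lemma multiplicity_fact:
  fixes p n N :: nat
  assumes p: "prime p" and "n \<le> N"
  shows "multiplicity p (fact n) = (\<Sum>i=1..N. n div p ^ i)"
  using \<open>n \<le> N\<close>
proof (induction n)
  case 0
  then show ?case by simp
next
  case (Suc n)
  have "multiplicity p (fact (Suc n)) = multiplicity p (Suc n) + multiplicity p (fact n)"
    unfolding fact_Suc of_nat_id by (rule prime_elem_multiplicity_mult_distrib) (use p in auto)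
  also have "\<dots> = (\<Sum>i=1..N. of_bool (p ^ i dvd Suc n)) + (\<Sum>i=1..N. n div p ^ i)"
    using multiplicity_eq_card_prime_power_dvd[OF p _ Suc.prems] Suc by simp
  also have "\<dots> = (\<Sum>i=1..N. n div p ^ i + of_bool (p ^ i dvd Suc n))"
    by (simp add: sum.distrib)
  also have "\<dots> = (\<Sum>i=1..N. Suc n div p ^ i)"
    by (simp add: Suc_div_eq_div_add_of_bool)
  finally show ?case .
qed

lemma double_div_eq: "2 * n div q = 2 * (n div q) + (n mod q + n mod q) div q" for n q :: nat
  unfolding mult_2 by (rule div_add1_eq)

lemma double_mod_div_le_1: "(n mod q + n mod q) div q \<le> 1" for n q :: nat
proof (cases "q = 0")
  case False
  then have "n mod q + n mod q < 2 * q" using mod_less_divisor[of q n] by linarith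
  then have "(n mod q + n mod q) div q < 2" by (rule less_mult_imp_div_less)
  then show ?thesis by simp
qed simp

text \<open>The \<open>i\<close>-th summand is the carry into position \<open>i\<close> when \<open>n + n\<close> is added
  in base \<open>p\<close>.\<close>

lemma multiplicity_central_binomial:
  fixes p n :: nat
  assumes "prime p"
  shows "multiplicity p (2 * n choose n) = (\<Sum>i=1..2*n. (n mod p ^ i + n mod p ^ i) div p ^ i)"
proof -
  have "fact (2 * n) = (fact n * fact n * (2 * n choose n) :: nat)"
    using binomial_fact_lemma[of n "2 * n"] by (simp add: mult_2)
  then have "multiplicity p (fact (2 * n)) =
      2 * multiplicity p (fact n) + multiplicity p (2 * n choose n)"
    using assms by (simp add: prime_elem_multiplicity_mult_distrib)
  moreover have "multiplicity p (fact (2 * n)) =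
      (\<Sum>i=1..2*n. 2 * (n div p ^ i) + (n mod p ^ i + n mod p ^ i) div p ^ i)"
    unfolding double_div_eq[symmetric] by (rule multiplicity_fact[OF assms order.refl])
  moreover have "multiplicity p (fact n) = (\<Sum>i=1..2*n. n div p ^ i)"
    using assms by (rule multiplicity_fact) simp
  ultimately show ?thesis by (simp only: sum.distrib sum_distrib_left)
qed

lemma prime_power_multiplicity_central_binomial_le:
  fixes p n :: nat
  assumes p: "prime p" and "0 < n"
  shows "p ^ multiplicity p (2 * n choose n) \<le> 2 * n"
proof (rule ccontr)
  define v where "v = multiplicity p (2 * n choose n)"
  assume "\<not> p ^ multiplicity p (2 * n choose n) \<le> 2 * n"
  then have big: "2 * n < p ^ v" by (simp add: v_def)
  with \<open>0 < n\<close> have "0 < v" by (cases v) auto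
  have carry_le: "(n mod p ^ i + n mod p ^ i) div p ^ i \<le> of_bool (i < v)" for i
  proof (cases "i < v")
    case False
    then have "p ^ v \<le> p ^ i" using prime_gt_1_nat[OF p] by simp
    then have "2 * n < p ^ i" using big by linarith
    then show ?thesis by simp
  qed (use double_mod_div_le_1[of n "p ^ i"] in simp)
  have "v = (\<Sum>i=1..2*n. (n mod p ^ i + n mod p ^ i) div p ^ i)"
    unfolding v_def by (rule multiplicity_central_binomial[OF p])
  also have "\<dots> \<le> (\<Sum>i=1..2*n. of_bool (i < v))"
    using carry_le by (rule sum_mono)
  also have "\<dots> = card ({1..2*n} \<inter> {i. i < v})" by simp
  also have "\<dots> \<le> card {1..<v}" by (rule card_mono) auto
  also have "\<dots> < v" using \<open>0 < v\<close> by simp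
  finally show False by simp
qed

lemma multiplicity_central_binomial_le_1:
  fixes p n :: nat
  assumes p: "prime p" and "2 * n < p * p"
  shows "multiplicity p (2 * n choose n) \<le> 1"
proof (cases "n = 0")
  case False
  then have "p ^ multiplicity p (2 * n choose n) \<le> 2 * n"
    using prime_power_multiplicity_central_binomial_le[OF p] by simp
  then have "p ^ multiplicity p (2 * n choose n) < p ^ 2"
    using assms(2) by (simp add: power2_eq_square)
  then show ?thesis using prime_gt_1_nat[OF p] by simp
qed simp

lemma multiplicity_central_binomial_eq_0:
  fixes p n :: nat
  assumes p: "prime p" "2 < p" and "p \<le> n" "2 * n < 3 * p"
  shows "multiplicity p (2 * n choose n) = 0"
proof -
  have "(n mod p ^ i + n mod p ^ i) div p ^ i = 0" if "1 \<le> i" for i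
  proof (cases "i = 1")
    case True
    have "n mod p = n - p" using assms(3,4) by (simp add: le_mod_geq)
    then show ?thesis using True assms(3,4) by simp
  next
    case False
    have "3 * p \<le> p ^ 2" using p(2) by (simp add: power2_eq_square)
    also have "\<dots> \<le> p ^ i" using False that prime_gt_1_nat[OF p(1)] by simp
    finally have "2 * n < p ^ i" using assms(4) by linarith
    then show ?thesis by simp
  qed
  then show ?thesis by (simp add: multiplicity_central_binomial[OF p(1)])
qed

section \<open>Bertrand's postulate\<close>

definition primorial :: "nat \<Rightarrow> nat" where
  "primorial m = \<Prod>{p. prime p \<and> p \<le> m}"

lemma prod_primes_dvd:
  fixes x :: nat and A :: "nat set"
  assumes "x \<noteq> 0" and "\<And>p. p \<in> A \<Longrightarrow> prime p \<and> p dvd x"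
  shows "\<Prod>A dvd x"
proof -
  have A: "A \<subseteq> prime_factors x" using assms by (auto simp: in_prime_factors_iff)
  have "\<Prod>A = (\<Prod>p\<in>A. p ^ 1)" by simp
  also have "\<dots> dvd (\<Prod>p\<in>A. p ^ multiplicity p x)"
    using assms
    by (intro prod_dvd_prod le_imp_power_dvd) (simp add: Suc_le_eq prime_multiplicity_gt_zero_iff)
  also have "\<dots> dvd (\<Prod>p\<in>prime_factors x. p ^ multiplicity p x)"
    using A by (intro prod_dvd_prod_subset) simp_all
  also have "\<dots> = x" using assms(1) by (simp add: prod_prime_factors)
  finally show ?thesis .
qed

lemma prod_primes_between_dvd_binomial:
  fixes k :: nat
  shows "\<Prod>{p. prime p \<and> k + 1 < p \<and> p \<le> 2 * k + 1} dvd (2 * k + 1 choose k)"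
proof (rule prod_primes_dvd)
  fix p assume "p \<in> {p. prime p \<and> k + 1 < p \<and> p \<le> 2 * k + 1}"
  then have p: "prime p" "k + 1 < p" "p \<le> 2 * k + 1" by auto
  have "fact k * fact (k + 1) * (2 * k + 1 choose k) = (fact (2 * k + 1) :: nat)"
    using binomial_fact_lemma[of k "2 * k + 1"] by (simp add: Suc_diff_le)
  moreover have "p dvd (fact (2 * k + 1) :: nat)" using p by (simp add: prime_dvd_fact_iff del: fact_Suc)
  moreover have "\<not> p dvd (fact k * fact (k + 1) :: nat)"
    using p by (simp add: prime_dvd_mult_iff prime_dvd_fact_iff del: fact_Suc)
  ultimately show "prime p \<and> p dvd (2 * k + 1 choose k)"
    using p(1) by (metis prime_dvd_mult_iff)
qed simp

lemma binomial_odd_le_four_pow: "(2 * k + 1 choose k) \<le> (4::nat) ^ k"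
proof -
  have "(2 * k + 1 choose k) \<le> (\<Sum>i\<le>k. 2 * k + 1 choose i)"
    by (rule member_le_sum) auto
  also have "\<dots> = 2 ^ (2 * k)" by (rule binomial_r_part_sum)
  also have "\<dots> = 4 ^ k" by (simp add: power_mult)
  finally show ?thesis .
qed

lemma primorial_odd:
  "primorial (2 * k + 1) = primorial (k + 1) * \<Prod>{p. prime p \<and> k + 1 < p \<and> p \<le> 2 * k + 1}"
proof -
  have "{p. prime p \<and> p \<le> 2 * k + 1} =
      {p. prime p \<and> p \<le> k + 1} \<union> {p. prime p \<and> k + 1 < p \<and> p \<le> 2 * k + 1}" by auto
  then show ?thesis unfolding primorial_def by (simp add: prod.union_disjoint disjoint_iff)
qed

lemma primorial_eq_primorial_pred:
  assumes "\<not> prime m"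
  shows "primorial m = primorial (m - 1)"
proof -
  have "prime p \<and> p \<le> m \<longleftrightarrow> prime p \<and> p \<le> m - 1" for p
    using assms by (cases "p = m") auto
  then show ?thesis unfolding primorial_def by simp
qed

lemma primorial_le_four_pow: "primorial m \<le> 4 ^ m"
proof (induction m rule: less_induct)
  case (less m)
  consider "m < 2" | "m = 2" | "2 < m" "even m" | k where "1 \<le> k" "m = 2 * k + 1"
  proof (cases "2 < m")
    case True
    show ?thesis
    proof (cases "even m")
      case False
      then obtain k where "m = 2 * k + 1" by (rule oddE)
      with True show ?thesis using that(4)[of k] by simp
    qed (use True that(3) in simp)
  qed (use that(1,2) in linarith)
  then show ?case
  proof cases
    case 1
    then have no_primes: "{p. prime p \<and> p \<le> m} = {}" by (auto dest: prime_ge_2_nat)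
    show ?thesis unfolding primorial_def no_primes by simp
  next
    case 2
    then have only_2: "{p. prime p \<and> p \<le> m} = {2}" by (auto dest: prime_ge_2_nat)
    show ?thesis unfolding primorial_def only_2 using 2 by simp
  next
    case 3
    then have "primorial m = primorial (m - 1)"
      using prime_odd_nat by (intro primorial_eq_primorial_pred) auto
    also have "\<dots> \<le> 4 ^ (m - 1)" using 3 by (intro less.IH) simp
    also have "\<dots> \<le> 4 ^ m" by simp
    finally show ?thesis .
  next
    case 4
    have "primorial m = primorial (k + 1) * \<Prod>{p. prime p \<and> k + 1 < p \<and> p \<le> 2 * k + 1}"
      unfolding 4 by (rule primorial_odd)
    also have "\<dots> \<le> 4 ^ (k + 1) * (2 * k + 1 choose k)"
    proof (rule mult_le_mono)
      show "primorial (k + 1) \<le> 4 ^ (k + 1)" using 4 by (intro less.IH) simp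
      show "\<Prod>{p. prime p \<and> k + 1 < p \<and> p \<le> 2 * k + 1} \<le> 2 * k + 1 choose k"
        by (rule dvd_imp_le[OF prod_primes_between_dvd_binomial]) simp
    qed
    also have "\<dots> \<le> 4 ^ (k + 1) * 4 ^ k" by (rule mult_le_mono2) (rule binomial_odd_le_four_pow)
    also have "\<dots> = 4 ^ m" by (simp add: 4 power_add[symmetric])
    finally show ?thesis .
  qed
qed

lemma four_pow_le_central_binomial: "(4::nat) ^ n \<le> (2 * n + 1) * (2 * n choose n)"
proof -
  have "(4::nat) ^ n = (\<Sum>k\<le>2 * n. 2 * n choose k)" by (simp add: choose_row_sum power_mult)
  also have "\<dots> \<le> (\<Sum>k\<le>2 * n. 2 * n choose n)"
    by (rule sum_mono) (metis binomial_maximum nonzero_mult_div_cancel_left zero_neq_numeral)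
  also have "\<dots> = (2 * n + 1) * (2 * n choose n)" by simp
  finally show ?thesis .
qed

lemma prime_factor_central_binomial_le:
  fixes n p :: nat
  assumes no_prime: "\<nexists>q. prime q \<and> n < q \<and> q \<le> 2 * n" and "3 \<le> n"
    and p: "p \<in> prime_factors (2 * n choose n)"
  shows "3 * p \<le> 2 * n"
proof (rule ccontr)
  assume "\<not> 3 * p \<le> 2 * n"
  have "prime p" "p dvd (2 * n choose n)" using p by auto
  moreover have "(2 * n choose n) dvd fact (2 * n)"
    using binomial_fact_lemma[of n "2 * n"] by (metis dvd_triv_right le_add2 mult_2)
  ultimately have "p \<le> 2 * n" using prime_dvd_fact_iff dvd_trans by blast
  then have "p \<le> n" using no_prime \<open>prime p\<close> by (meson not_le)
  then have "multiplicity p (2 * n choose n) = 0"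
    using \<open>prime p\<close> \<open>\<not> 3 * p \<le> 2 * n\<close> \<open>3 \<le> n\<close>
    by (intro multiplicity_central_binomial_eq_0) simp_all
  then show False using p by (simp add: prime_factors_multiplicity)
qed

lemma prod_large_prime_factors_central_binomial_le:
  fixes n B :: nat
  defines "C \<equiv> 2 * n choose n"
  assumes no_prime: "\<nexists>p. prime p \<and> n < p \<and> p \<le> 2 * n" and "3 \<le> n" and B: "2 * n < B * B"
  shows "(\<Prod>p\<in>prime_factors C - {..<B}. p ^ multiplicity p C) \<le> 4 ^ (2 * n div 3)"
proof -
  let ?P = "prime_factors C - {..<B}"
  have "(\<Prod>p\<in>?P. p ^ multiplicity p C) \<le> (\<Prod>p\<in>?P. p)"
  proof (rule prod_mono)
    fix p assume p: "p \<in> ?P"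
    then have "prime p" by auto
    moreover have "2 * n < p * p" using p B mult_le_mono[of B p B p] by auto
    ultimately have "multiplicity p C \<le> 1"
      unfolding C_def by (rule multiplicity_central_binomial_le_1)
    moreover have "0 < p" using \<open>prime p\<close> prime_gt_0_nat by blast
    ultimately show "0 \<le> p ^ multiplicity p C \<and> p ^ multiplicity p C \<le> p"
      by (auto simp: le_Suc_eq)
  qed
  also have "\<dots> \<le> primorial (2 * n div 3)"
  proof -
    have "?P \<subseteq> {p. prime p \<and> p \<le> 2 * n div 3}"
      using prime_factor_central_binomial_le[OF no_prime \<open>3 \<le> n\<close>]
      by (auto simp: C_def less_eq_div_iff_mult_less_eq mult.commute)
    then have "\<Prod>?P dvd primorial (2 * n div 3)"
      unfolding primorial_def by (rule prod_dvd_prod_subset[rotated]) simp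
    then show ?thesis by (rule dvd_imp_le) (simp add: primorial_def prime_gt_0_nat)
  qed
  also have "\<dots> \<le> 4 ^ (2 * n div 3)" by (rule primorial_le_four_pow)
  finally show ?thesis .
qed

lemma central_binomial_le_if_no_prime_between:
  fixes n B :: nat
  assumes no_prime: "\<nexists>p. prime p \<and> n < p \<and> p \<le> 2 * n" and "3 \<le> n" and B: "2 * n < B * B"
  shows "2 * n choose n \<le> (2 * n) ^ B * 4 ^ (2 * n div 3)"
proof -
  define C where "C = 2 * n choose n"
  define P where "P = prime_factors C"
  have "C = (\<Prod>p\<in>P. p ^ multiplicity p C)" unfolding P_def by (simp add: C_def prime_factorization_nat)
  also have "\<dots> = (\<Prod>p\<in>P \<inter> {..<B}. p ^ multiplicity p C) *
      (\<Prod>p\<in>P - {..<B}. p ^ multiplicity p C)"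
    by (rule prod.Int_Diff) (simp add: P_def)
  also have "\<dots> \<le> (2 * n) ^ B * 4 ^ (2 * n div 3)"
  proof (rule mult_le_mono)
    have "p ^ multiplicity p C \<le> 2 * n" if "p \<in> P" for p
      using that \<open>3 \<le> n\<close> unfolding P_def C_def
      by (intro prime_power_multiplicity_central_binomial_le) auto
    then show "(\<Prod>p\<in>P \<inter> {..<B}. p ^ multiplicity p C) \<le> (2 * n) ^ B"
      using \<open>3 \<le> n\<close> by (intro prod_le_power) (auto simp: card_mono[of "{..<B}", simplified])
    show "(\<Prod>p\<in>P - {..<B}. p ^ multiplicity p C) \<le> 4 ^ (2 * n div 3)"
      unfolding P_def C_def using assms by (rule prod_large_prime_factors_central_binomial_le)
  qed
  finally show ?thesis by (simp add: C_def)
qed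

lemma twelve_Suc_mult_two_pow_less_four_pow:
  "7 \<le> k \<Longrightarrow> 12 * (k + 1) * (2 ^ k + 1) < (4::nat) ^ k"
proof (induction k rule: dec_induct)
  case base
  then show ?case by simp
next
  case (step k)
  have "12 * (Suc k + 1) * (2 ^ Suc k + 1) \<le> 4 * (12 * (k + 1) * (2 ^ k + 1))"
    by (simp add: algebra_simps)
  also have "\<dots> < 4 * 4 ^ k" using step.IH by simp
  finally show ?case by simp
qed

lemma erdos_bound_less_four_pow:
  fixes n k :: nat
  assumes "7 \<le> k" and k: "4 ^ k \<le> 2 * n" "2 * n < 4 ^ (k + 1)"
  shows "(2 * n + 1) * (2 * n) ^ 2 ^ (k + 1) * 4 ^ (2 * n div 3) < 4 ^ n"
proof (rule ccontr)
  define x where "x = 2 * n"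
  define B :: nat where "B = 2 ^ (k + 1)"
  assume "\<not> ?thesis"
  then have le: "4 ^ n \<le> (x + 1) * x ^ B * 4 ^ (x div 3)" by (simp add: x_def B_def)
  have "(4::nat) ^ 1 \<le> 4 ^ k" using \<open>7 \<le> k\<close> by (intro power_increasing) simp_all
  then have "2 \<le> x" using k(1) by (simp add: x_def)
  txt \<open>Cubing turns \<open>4 ^ (x div 3)\<close> into at most \<open>4 ^ (2 * n)\<close>, which cancels
    against \<open>(4 ^ n) ^ 3 = 4 ^ n * 4 ^ (2 * n)\<close>.\<close>
  have "(4::nat) ^ n * 4 ^ (2 * n) = (4 ^ n) ^ 3"
    by (simp only: power_add[symmetric] power_mult[symmetric]) simp
  also have "\<dots> \<le> ((x + 1) * x ^ B * 4 ^ (x div 3)) ^ 3"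
    using le by (rule power_mono) simp
  also have "\<dots> = ((x + 1) * x ^ B) ^ 3 * 4 ^ (x div 3 * 3)"
    by (simp only: power_mult_distrib power_mult)
  also have "\<dots> \<le> ((x + 1) * x ^ B) ^ 3 * 4 ^ (2 * n)"
    by (intro mult_le_mono2 power_increasing) (simp_all add: x_def)
  finally have "4 ^ n \<le> ((x + 1) * x ^ B) ^ 3" by simp
  also have "\<dots> \<le> (x ^ 2 * x ^ B) ^ 3"
  proof (intro power_mono mult_le_mono1)
    have "x + 1 \<le> 2 * x" using \<open>2 \<le> x\<close> by simp
    also have "\<dots> \<le> x * x" using \<open>2 \<le> x\<close> by (rule mult_le_mono1)
    finally show "x + 1 \<le> x ^ 2" by (simp add: power2_eq_square)
  qed simp
  also have "\<dots> = x ^ ((2 + B) * 3)" by (simp only: power_add power_mult)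
  also have "\<dots> < (4 ^ (k + 1)) ^ ((2 + B) * 3)"
    using k(2) by (intro power_strict_mono) (simp_all add: x_def)
  also have "\<dots> = 4 ^ ((k + 1) * ((2 + B) * 3))" by (simp only: power_mult)
  finally have "n < (k + 1) * ((2 + B) * 3)" by simp
  moreover have "2 * ((k + 1) * ((2 + B) * 3)) = 12 * (k + 1) * (2 ^ k + 1)"
    by (simp add: B_def algebra_simps)
  ultimately have "4 ^ k < 12 * (k + 1) * (2 ^ k + 1)" using k(1) by linarith
  with twelve_Suc_mult_two_pow_less_four_pow[OF \<open>7 \<le> k\<close>] show False by simp
qed

lemma bertrand_large:
  fixes n :: nat
  assumes "8192 \<le> n"
  shows "\<exists>p. prime p \<and> n < p \<and> p \<le> 2 * n"
proof (rule ccontr)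
  assume no_prime: "\<nexists>p. prime p \<and> n < p \<and> p \<le> 2 * n"
  obtain k where k: "4 ^ k \<le> 2 * n" "2 * n < 4 ^ (k + 1)"
    using ex_power_ivl1[of 4 "2 * n"] assms by auto
  have "7 \<le> k"
  proof (rule ccontr)
    assume "\<not> 7 \<le> k"
    then have "(4::nat) ^ (k + 1) \<le> 4 ^ 7" by (intro power_increasing) simp_all
    then show False using k(2) assms by simp
  qed
  have "(2::nat) ^ (k + 1) * 2 ^ (k + 1) = 4 ^ (k + 1)" by (simp flip: power_mult_distrib)
  then have "2 * n < 2 ^ (k + 1) * 2 ^ (k + 1)" using k(2) by simp
  then have "2 * n choose n \<le> (2 * n) ^ 2 ^ (k + 1) * 4 ^ (2 * n div 3)"
    using no_prime assms by (intro central_binomial_le_if_no_prime_between) simp_all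
  then have "(2 * n + 1) * (2 * n choose n) \<le>
      (2 * n + 1) * (2 * n) ^ 2 ^ (k + 1) * 4 ^ (2 * n div 3)"
    unfolding mult.assoc by (rule mult_le_mono2)
  with four_pow_le_central_binomial[of n] erdos_bound_less_four_pow[OF \<open>7 \<le> k\<close> k]
  show False by linarith
qed

lemma prime_if_no_divisor_below:
  fixes p k :: nat
  assumes "1 < p" "p < k * k" and no_divisor: "\<forall>d\<in>{2..<k}. \<not> d dvd p"
  shows "prime p"
  unfolding prime_nat_iff'
proof (intro conjI ballI notI)
  fix d assume d: "d \<in> {2..<p}" "d dvd p"
  then obtain e where p_eq: "p = d * e" by blast
  have "e \<noteq> 0" "e \<noteq> 1" using p_eq d(1) \<open>1 < p\<close> by auto
  define s where "s = min d e"
  have "s dvd p" using p_eq by (simp add: s_def min_def)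
  have "2 \<le> s" using d(1) \<open>e \<noteq> 0\<close> \<open>e \<noteq> 1\<close> by (simp add: s_def)
  have "s * s \<le> p" unfolding p_eq s_def by (rule mult_le_mono) simp_all
  have "s < k"
  proof (rule ccontr)
    assume "\<not> s < k"
    then have "k * k \<le> s * s" by (simp add: mult_le_mono)
    with \<open>s * s \<le> p\<close> \<open>p < k * k\<close> show False by simp
  qed
  with no_divisor \<open>2 \<le> s\<close> \<open>s dvd p\<close> show False by auto
qed (fact \<open>1 < p\<close>)

lemma bertrand_by_prime_chain:
  fixes n :: nat and ps :: "nat list"
  assumes "successively (\<lambda>p q. q \<le> 2 * p) ps" "\<forall>p\<in>set ps. prime p"
    and "ps \<noteq> []" "hd ps \<le> n" "n < last ps"
  shows "\<exists>p. prime p \<and> n < p \<and> p \<le> 2 * n"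
  using assms
proof (induction ps)
  case Nil
  then show ?case by simp
next
  case (Cons p ps)
  show ?case
  proof (cases ps)
    case Nil
    then show ?thesis using Cons.prems by simp
  next
    case (Cons q qs)
    show ?thesis
    proof (cases "n < q")
      case True
      then show ?thesis using Cons.prems \<open>ps = q # qs\<close> by auto
    next
      case False
      then show ?thesis using Cons.IH Cons.prems \<open>ps = q # qs\<close> by simp
    qed
  qed
qed

lemma bertrand_small:
  fixes n :: nat
  assumes "1 \<le> n" "n < 8192"
  shows "\<exists>p. prime p \<and> n < p \<and> p \<le> 2 * n"
proof (cases "n = 1")
  case True
  then show ?thesis by (intro exI[of _ 2]) simp
next
  case False
  define ps :: "nat list" where "ps = [2, 3, 5, 7, 13, 23, 43, 83, 163, 317, 631, 1259, 2503, 5003, 9973]"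
  txt \<open>The simp rule \<open>prime_nat_numeral_eq\<close> tests all divisors below \<open>p\<close>, which is too slow
    for the larger primes; they are certified by divisors below \<open>sqrt p\<close> instead.\<close>
  have "list_all prime [2, 3, 5, 7, 13, 23, 43 :: nat]" by simp
  moreover have "prime (83::nat)"
    by (rule prime_if_no_divisor_below[of _ 10]) (simp_all add: atLeastLessThan_upt upt_rec)
  moreover have "prime (163::nat)"
    by (rule prime_if_no_divisor_below[of _ 13]) (simp_all add: atLeastLessThan_upt upt_rec)
  moreover have "prime (317::nat)"
    by (rule prime_if_no_divisor_below[of _ 18]) (simp_all add: atLeastLessThan_upt upt_rec)
  moreover have "prime (631::nat)"
    by (rule prime_if_no_divisor_below[of _ 26]) (simp_all add: atLeastLessThan_upt upt_rec)
  moreover have "prime (1259::nat)"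
    by (rule prime_if_no_divisor_below[of _ 36]) (simp_all add: atLeastLessThan_upt upt_rec)
  moreover have "prime (2503::nat)"
    by (rule prime_if_no_divisor_below[of _ 51]) (simp_all add: atLeastLessThan_upt upt_rec)
  moreover have "prime (5003::nat)"
    by (rule prime_if_no_divisor_below[of _ 71]) (simp_all add: atLeastLessThan_upt upt_rec)
  moreover have "prime (9973::nat)"
    by (rule prime_if_no_divisor_below[of _ 100]) (simp_all add: atLeastLessThan_upt upt_rec)
  ultimately have primes: "\<forall>p\<in>set ps. prime p" by (simp add: ps_def del: prime_nat_numeral_eq)
  have chain: "successively (\<lambda>p q. q \<le> 2 * p) ps" by (simp add: ps_def)
  show ?thesis
  proof (rule bertrand_by_prime_chain[OF chain primes])
    show "ps \<noteq> []" "hd ps \<le> n" "n < last ps" using assms False by (simp_all add: ps_def)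
  qed
qed

theorem bertrand:
  fixes n :: nat
  assumes "1 \<le> n"
  shows "\<exists>p. prime p \<and> n < p \<and> p \<le> 2 * n"
  using assms bertrand_small bertrand_large by (cases "n < 8192") simp_all

section \<open>Products of factorials\<close>

lemma fact_add_eq_fact_mult_Delta: "fact (m + k) = fact m * Delta (m + 1) k"
proof (induction k)
  case 0
  then show ?case by (simp add: Delta_def)
next
  case (Suc k)
  then show ?case by (simp add: Delta_def algebra_simps)
qed

lemma Delta_le_power:
  assumes "m + k \<le> M"
  shows "Delta m k \<le> M ^ k"
proof -
  have "Delta m k \<le> (\<Prod>j<k. M)" unfolding Delta_def using assms by (intro prod_mono) simp
  then show ?thesis by simp
qed

lemma power_div_fact_le_exp:
  fixes x :: real
  assumes "0 \<le> x"
  shows "x ^ n / fact n \<le> exp x"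
proof -
  have sums: "(\<lambda>m. x ^ m /\<^sub>R fact m) sums exp x" by (rule exp_converges)
  have "(\<Sum>m\<in>{n}. x ^ m /\<^sub>R fact m) \<le> (\<Sum>m. x ^ m /\<^sub>R fact m)"
    by (rule sum_le_suminf) (use sums assms in \<open>auto simp: sums_iff\<close>)
  also have "\<dots> = exp x" using sums by (simp add: sums_iff)
  finally show ?thesis by (simp add: divide_inverse mult.commute)
qed

lemma ln_fact_ge: "real n * ln (real n) - real n \<le> ln (fact n)"
proof (cases "n = 0")
  case False
  then have pos: "0 < real n" by simp
  have "ln (real n ^ n / fact n) \<le> ln (exp (real n))"
    using pos power_div_fact_le_exp[of "real n" n] by (subst ln_le_cancel_iff) auto
  moreover have "ln (real n ^ n / fact n) = real n * ln (real n) - ln (fact n)"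
    using pos by (simp add: ln_div ln_realpow)
  ultimately show ?thesis by simp
qed simp

lemma ln_le_mult_ln_if_le_power:
  fixes x M k :: nat
  assumes "0 < x" "0 < M" "x \<le> M ^ k"
  shows "ln (real x) \<le> real k * ln (real M)"
proof -
  have "ln (real x) \<le> ln (real M ^ k)"
    using assms by (subst ln_le_cancel_iff) (simp_all flip: of_nat_power)
  also have "\<dots> = real k * ln (real M)" using assms(2) by (simp add: ln_realpow)
  finally show ?thesis .
qed

lemma prime_le_if_fact_dvd_prod_fact:
  fixes a :: "'i \<Rightarrow> nat"
  assumes "finite L" "fact n dvd (\<Prod>l\<in>L. fact (a l) :: nat)" "\<And>l. l \<in> L \<Longrightarrow> a l \<le> M"
    and p: "prime p" "p \<le> n"
  shows "p \<le> M"
proof -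
  have "p dvd (fact n :: nat)" using p prime_dvd_fact_iff by blast
  then have "p dvd (\<Prod>l\<in>L. fact (a l) :: nat)" using assms(2) by (rule dvd_trans)
  then obtain l where "l \<in> L" "p dvd (fact (a l) :: nat)"
    unfolding prime_dvd_prod_iff[OF assms(1) p(1)] ..
  then have "p \<le> a l" using prime_dvd_fact_iff[OF p(1)] by simp
  then show ?thesis using assms(3)[OF \<open>l \<in> L\<close>] by (rule le_trans)
qed

lemma less_double_if_no_prime_between:
  fixes m n :: nat
  assumes "1 \<le> m" and no_prime: "\<And>p. prime p \<Longrightarrow> p \<le> n \<Longrightarrow> p \<le> m"
  shows "n < 2 * m"
proof (rule ccontr)
  assume "\<not> n < 2 * m"
  obtain p where "prime p" "m < p" "p \<le> 2 * m" using bertrand[OF assms(1)] by blast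
  then have "p \<le> m" using no_prime \<open>\<not> n < 2 * m\<close> by simp
  with \<open>m < p\<close> show False by simp
qed

lemma prod_fact_Diff_eq_Delta_mult:
  fixes a :: "'i \<Rightarrow> nat"
  assumes "finite L" "u \<in> L" "v \<in> L" "u \<noteq> v" "a u \<le> n1" "a v \<le> n2"
    and "(\<Prod>l\<in>L. fact (a l)) = (fact n1 * fact n2 :: nat)"
  shows "(\<Prod>l\<in>L - {u, v}. fact (a l)) = Delta (a u + 1) (n1 - a u) * Delta (a v + 1) (n2 - a v)"
proof -
  have "(\<Prod>l\<in>L. fact (a l)) = fact (a u) * fact (a v) * (\<Prod>l\<in>L - {u, v}. fact (a l) :: nat)"
    using assms(1-4)
    by (simp add: prod.remove[of L u] prod.remove[of "L - {u}" v] Diff_insert2[symmetric] algebra_simps)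
  moreover have "fact n1 * fact n2 =
      fact (a u) * fact (a v) * (Delta (a u + 1) (n1 - a u) * Delta (a v + 1) (n2 - a v))"
    using fact_add_eq_fact_mult_Delta[of "a u" "n1 - a u"]
      fact_add_eq_fact_mult_Delta[of "a v" "n2 - a v"] assms(5,6)
    by (simp add: algebra_simps)
  ultimately show ?thesis using assms(7) by simp
qed

theorem lemma2p2:
  fixes t :: nat and a :: "nat \<Rightarrow> nat" and n1 n2 i :: nat
  assumes "t \<ge> 3"
    and "\<And>l l'. 1 \<le> l \<Longrightarrow> l \<le> l' \<Longrightarrow> l' \<le> t \<Longrightarrow> a l' \<le> a l"
    and "a t \<ge> 2"
    and "n1 \<ge> n2" and "n2 \<ge> 2"
    and "\<And>l. 1 \<le> l \<Longrightarrow> l \<le> t \<Longrightarrow> a l \<noteq> n1 \<and> a l \<noteq> n2"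
    and "(\<Prod>l=1..t. fact (a l)) = (fact n1 * fact n2 :: nat)"
    and "n1 > a 1"
    and "2 \<le> i" and "i \<le> t" and "n2 > a i"
  shows "(\<Prod>l\<in>{1..t} - {1, i}. fact (a l)) =
           Delta (a 1 + 1) (n1 - a 1) * (Delta (a i + 1) (n2 - a i) :: nat)
       \<and> (\<forall>j < n1 - a 1. \<not> prime (a 1 + 1 + j))
       \<and> (let A = Max (a ` ({1..t} - {1, i})) in
            real A * ln (real A) - real A \<le> ln (fact A)
          \<and> ln (fact A) \<le> real ((n1 - a 1) + (n2 - a i)) * ln (2 * real (a 1 + 1)))"
proof -
  define S where "S = {1..t} - {1, i}"
  define A where "A = Max (a ` S)"
  define M where "M = 2 * (a 1 + 1)"
  have a_le_a1: "a l \<le> a 1" if "l \<in> {1..t}" for l using assms(2)[of 1 l] that by simp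
  have prod_S: "(\<Prod>l\<in>S. fact (a l)) = Delta (a 1 + 1) (n1 - a 1) * Delta (a i + 1) (n2 - a i)"
    unfolding S_def using assms(7-11) by (intro prod_fact_Diff_eq_Delta_mult) auto
  have "fact n1 dvd (\<Prod>l=1..t. fact (a l) :: nat)" unfolding assms(7) by simp
  then have no_prime: "p \<le> a 1" if "prime p" "p \<le> n1" for p
    using a_le_a1 that by (rule prime_le_if_fact_dvd_prod_fact[rotated]) simp_all
  have "1 \<le> a 1" using assms(1,3) a_le_a1[of t] by simp
  then have "n1 < 2 * a 1" using no_prime by (rule less_double_if_no_prime_between)
  have "(if i = 2 then 3 else 2) \<in> S" using assms(1,9,10) by (auto simp: S_def)
  then have "A \<in> a ` S" unfolding A_def by (intro Max_in) (auto simp: S_def)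
  then have "fact A dvd (\<Prod>l\<in>S. fact (a l) :: nat)" by (auto simp: S_def)
  then have "fact A \<le> Delta (a 1 + 1) (n1 - a 1) * Delta (a i + 1) (n2 - a i)"
    unfolding prod_S by (rule dvd_imp_le) (simp add: Delta_def)
  also have "\<dots> \<le> M ^ (n1 - a 1) * M ^ (n2 - a i)"
    using \<open>n1 < 2 * a 1\<close> assms(4,8,11) by (intro mult_le_mono Delta_le_power) (simp_all add: M_def)
  finally have "ln (real (fact A)) \<le> real ((n1 - a 1) + (n2 - a i)) * ln (real M)"
    by (intro ln_le_mult_ln_if_le_power) (simp_all add: M_def power_add)
  moreover have "\<not> prime (a 1 + 1 + j)" if "j < n1 - a 1" for j
    using no_prime[of "a 1 + 1 + j"] that by linarith
  ultimately show ?thesis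
    using prod_S ln_fact_ge[of A] unfolding Let_def S_def[symmetric] A_def[symmetric] by (simp add: M_def)
qed

end
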